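(* Consider the system $S'=\Lambda-\beta\frac{SB}{B+D}-(\mu+\psi)S+wR$, $V'=\psi S-\sigma\beta\frac{VB}{B+D}-\mu V$, $I'=\beta\frac{SB}{B+D}+\sigma\beta\frac{VB}{B+D}-(\mu+\gamma)I$, $R'=\gamma I-(\mu+w)R$, $B'=\eta I-\delta B$. Consider a bifurcation point in parameter space (as described in the context) at which ${\cal R}_0=1$, $a=0$, $b>0$ and $e\neq 0$. Then $c\le 0$.
   Context: All parameters $\Lambda,\beta,D,\mu,\psi,w,\sigma,\gamma,\eta,\delta$ are positive constants. The unique disease-free equilibrium (DFE) is $(S,V,I,R,B)=\left(\frac{\Lambda}{\mu+\psi},\frac{\Lambda\psi}{\mu(\mu+\psi)},0,0,0\right)$, the infected variables are $I$ and $B$, and ${\cal R}_0=\frac{\eta\beta(S_0+\sigma V_0)}{D\delta(\mu+\gamma)}$ where $S_0,V_0$ are the DFE values. A bifurcation point is a parameter value at which ${\cal R}_0=1$, zero is a simple eigenvalue of the Jacobian at the DFE and all other eigenvalues have negative real parts. Two of the model parameters are chosen as $\alpha_1,\alpha_2$ (shifted so that the bifurcation point corresponds to $\alpha_1=\alpha_2=0$), with the DFE independent of $\alpha_1$. Adjoining $\dot\alpha_1=\dot\alpha_2=0$ and restricting to the centre manifold of the DFE at the bifurcation point gives a scalar equation $\dot u=h(u,\alpha_1,\alpha_2)$, with $u$ a coordinate vanishing at the DFE and increasing along the null eigenvector whose infected components are non-negative; $h(0,\alpha_1,\alpha_2)=0$. Set $a=\tfrac12h_{uu}$, $b=h_{u\alpha_1}$,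 $c=\tfrac13h_{uuu}$, $d=h_{uu\alpha_2}$, all at $(0,0,0)$, and $e=\frac{-bd+h_{uu\alpha_1}h_{u\alpha_2}}{2bc}$ evaluated at $(0,0,0)$. *)

theory Defs
  imports "HOL-Analysis.Analysis"
begin

definition Lam :: "real^10 \<Rightarrow> real" where "Lam p = p$0"
definition bet :: "real^10 \<Rightarrow> real" where "bet p = p$1"
definition DD  :: "real^10 \<Rightarrow> real" where "DD p = p$2"
definition mu  :: "real^10 \<Rightarrow> real" where "mu p = p$3"
definition psi :: "real^10 \<Rightarrow> real" where "psi p = p$4"
definition ww  :: "real^10 \<Rightarrow> real" where "ww p = p$5"
definition sig :: "real^10 \<Rightarrow> real" where "sig p = p$6"
definition gam :: "real^10 \<Rightarrow> real" where "gam p = p$7"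
definition eta :: "real^10 \<Rightarrow> real" where "eta p = p$8"
definition del :: "real^10 \<Rightarrow> real" where "del p = p$9"

definition F :: "real^10 \<Rightarrow> real^5 \<Rightarrow> real^5" where
  "F p x = (\<chi> k.
     (let S = x$0; V = x$1; I = x$2; R = x$3; B = x$4 in
      if k = 0 then Lam p - bet p * S * B / (B + DD p) - (mu p + psi p) * S + ww p * R
      else if k = 1 then psi p * S - sig p * bet p * V * B / (B + DD p) - mu p * V
      else if k = 2 then bet p * S * B / (B + DD p) + sig p * bet p * V * B / (B + DD p)
                          - (mu p + gam p) * I
      else if k = 3 then gam p * I - (mu p + ww p) * R
      else eta p * I - del p * B))"

definition dfe :: "real^10 \<Rightarrow> real^5" where
  "dfe p = (\<chi> k. if k = 0 then Lam p / (mu p + psi p)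
                 else if k = 1 then Lam p * psi p / (mu p * (mu p + psi p))
                 else 0)"

definition R0 :: "real^10 \<Rightarrow> real" where
  "R0 p = eta p * bet p * (dfe p $ 0 + sig p * dfe p $ 1) / (DD p * del p * (mu p + gam p))"

fun pd :: "'n::finite list \<Rightarrow> (real^'n \<Rightarrow> real) \<Rightarrow> real^'n \<Rightarrow> real" where
  "pd [] f = f"
| "pd (i # is) f = (\<lambda>x. deriv (\<lambda>t. pd is f (x + t *\<^sub>R axis i 1)) 0)"

definition pdv :: "'n::finite list \<Rightarrow> (real^'n \<Rightarrow> real^'m) \<Rightarrow> real^'n \<Rightarrow> real^'m" where
  "pdv is f = (\<lambda>x. \<chi> k. pd is (\<lambda>y. f y $ k) x)"

definition Ck_on :: "nat \<Rightarrow> (real^'n::finite) set \<Rightarrow> (real^'n \<Rightarrow> real) \<Rightarrow> bool" where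
  "Ck_on k U f \<longleftrightarrow>
     (\<forall>is. length is \<le> k \<longrightarrow> continuous_on U (pd is f)) \<and>
     (\<forall>is i x. length is < k \<longrightarrow> x \<in> U \<longrightarrow>
        (\<lambda>t. pd is f (x + t *\<^sub>R axis i 1)) differentiable (at 0))"

definition Ckv_on :: "nat \<Rightarrow> (real^'n::finite) set \<Rightarrow> (real^'n \<Rightarrow> real^'m::finite) \<Rightarrow> bool" where
  "Ckv_on k U f \<longleftrightarrow> (\<forall>j. Ck_on k U (\<lambda>y. f y $ j))"

definition jac :: "real^10 \<Rightarrow> real^5^5" where
  "jac p = (\<chi> r s. pd [s] (\<lambda>x. F p x $ r) (dfe p))"

definition charpoly :: "real^10 \<Rightarrow> complex \<Rightarrow> complex" where
  "charpoly p z = det (\<chi> r s. (if r = s then z else 0) - complex_of_real (jac p $ r $ s))"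

definition bif_point :: "real^10 \<Rightarrow> bool" where
  "bif_point p \<longleftrightarrow> (\<forall>i. p $ i > 0) \<and> R0 p = 1 \<and>
     charpoly p 0 = 0 \<and> deriv (charpoly p) 0 \<noteq> 0 \<and>
     (\<forall>z. charpoly p z = 0 \<longrightarrow> z \<noteq> 0 \<longrightarrow> Re z < 0)"

end

theory Submission
  imports Defs
begin

text \<open>Along the u-axis of the centre manifold the parameters stay at the bifurcation point,
  and x(u) = Phi(u,0,0) = dfe + u v + u^2 q + o(u^2) satisfies F(x(u)) = h(u) x'(u), where
  h(u) = h_1 u + a u^2 + (c/2) u^3 + o(u^3). The vector field splits exactly as
  F(dfe + y) = J y + beta y_B / (D (y_B + D)) N y with N linear. Comparing coefficients of u
  gives h_1 = 0 (as J v = 0 and v \<noteq> 0) and J q + (beta v_B / D^2) N v = a v. Since R0 = 1,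
  the functional l(y) = eta y_I + (mu + gamma) y_B annihilates J; so when a = 0 it forces
  (N v)_I = 0, and at order u^3 it gives (c/2) l(v) = eta beta v_B (N q)_I / D^2.
  The null vector has v_I, v_R, v_B > 0, hence l(v) > 0. Finally, with t chosen so that
  q_B = t v_B, the second-order equations give (N q)_I = D (1 - sigma) (q - t v)_S with
  (q - t v)_S < 0, while summing the rows of J v = 0 (conservation of the total population)
  together with (N v)_I = 0 forces sigma < 1. So c < 0.\<close>

subsection \<open>Taylor expansion along a coordinate line\<close>

lemma tendsto_Maclaurin_remainder:
  fixes f :: "nat \<Rightarrow> real \<Rightarrow> real"
  assumes "r > 0"
    and deriv: "\<And>m t. m < n \<Longrightarrow> \<bar>t\<bar> < r \<Longrightarrow> (f m has_real_derivative f (Suc m) t) (at t)"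
    and cont: "isCont (f n) 0"
  shows "((\<lambda>x. (f 0 x - (\<Sum>m<n. f m 0 / fact m * x ^ m)) / x ^ n) \<longlongrightarrow> f n 0 / fact n) (at 0)"
proof -
  have "\<exists>t. \<bar>t\<bar> \<le> \<bar>x\<bar> \<and> f 0 x = (\<Sum>m<n. f m 0 / fact m * x ^ m) + f n t / fact n * x ^ n"
    if "\<bar>x\<bar> < r" for x
    by (rule Maclaurin_bi_le) (use deriv that in auto)
  then obtain \<tau> where \<tau>: "\<And>x. \<bar>x\<bar> < r \<Longrightarrow> \<bar>\<tau> x\<bar> \<le> \<bar>x\<bar> \<and>
      f 0 x = (\<Sum>m<n. f m 0 / fact m * x ^ m) + f n (\<tau> x) / fact n * x ^ n"
    by metis
  have near: "\<forall>\<^sub>F x in at 0. \<bar>x\<bar> < r \<and> x \<noteq> 0"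
    using \<open>r > 0\<close> by (auto simp: eventually_at dist_real_def)
  have "(\<tau> \<longlongrightarrow> 0) (at 0)"
    by (rule Lim_null_comparison[where g = "\<lambda>x. \<bar>x\<bar>"])
      (use near \<tau> in \<open>auto elim: eventually_mono intro: tendsto_eq_intros\<close>)
  then have "((\<lambda>x. f n (\<tau> x) / fact n) \<longlongrightarrow> f n 0 / fact n) (at 0)"
    by (intro tendsto_divide isCont_tendsto_compose[OF cont]) auto
  then show ?thesis
    by (rule Lim_transform_eventually) (use near \<tau> in \<open>auto elim: eventually_mono\<close>)
qed

lemma has_real_derivative_pd_line:
  assumes "Ck_on N U g" "x + t *\<^sub>R axis k 1 \<in> U" "length is < N"
  shows "((\<lambda>t. pd is g (x + t *\<^sub>R axis k 1)) has_real_derivative pd (k # is) g (x + t *\<^sub>R axis k 1)) (at t)"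
proof -
  have "(\<lambda>s. pd is g (x + t *\<^sub>R axis k 1 + s *\<^sub>R axis k 1)) differentiable (at 0)"
    using assms unfolding Ck_on_def by blast
  then have "((\<lambda>s. pd is g (x + t *\<^sub>R axis k 1 + s *\<^sub>R axis k 1))
      has_real_derivative pd (k # is) g (x + t *\<^sub>R axis k 1)) (at 0)"
    by (simp only: pd.simps(2) DERIV_deriv_iff_real_differentiable)
  moreover have "(\<lambda>s. pd is g (x + (s + t) *\<^sub>R axis k 1))
      = (\<lambda>s. pd is g (x + t *\<^sub>R axis k 1 + s *\<^sub>R axis k 1))"
    by (simp add: scaleR_add_left add_ac)
  ultimately show ?thesis
    using DERIV_shift[where f = "\<lambda>t. pd is g (x + t *\<^sub>R axis k 1)" and x = 0 and z = t] by simp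
qed

lemma isCont_pd_line:
  assumes "Ck_on N U g" "open U" "x \<in> U" "length is \<le> N"
  shows "isCont (\<lambda>t. pd is g (x + t *\<^sub>R axis k 1)) 0"
proof (rule isCont_o2[where g = "pd is g"])
  show "isCont (\<lambda>t. x + t *\<^sub>R axis k 1) 0"
    by (intro continuous_intros)
  show "isCont (pd is g) (x + 0 *\<^sub>R axis k 1)"
    using assms continuous_on_eq_continuous_at unfolding Ck_on_def by auto
qed

lemma Ck_on_line_Maclaurin:
  assumes "Ck_on N U g" "open U" "x \<in> U" "n \<le> N"
  shows "((\<lambda>u. (g (x + u *\<^sub>R axis k 1) - (\<Sum>m<n. pd (replicate m k) g x / fact m * u ^ m)) / u ^ n)
    \<longlongrightarrow> pd (replicate n k) g x / fact n) (at 0)"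
proof -
  obtain r where r: "r > 0" "ball x r \<subseteq> U"
    using assms(2,3) open_contains_ball by blast
  have line: "x + t *\<^sub>R axis k 1 \<in> U" if "\<bar>t\<bar> < r" for t
    using r(2) that by (auto simp: dist_norm)
  have "((\<lambda>u. (pd (replicate 0 k) g (x + u *\<^sub>R axis k 1)
      - (\<Sum>m<n. pd (replicate m k) g (x + 0 *\<^sub>R axis k 1) / fact m * u ^ m)) / u ^ n)
    \<longlongrightarrow> pd (replicate n k) g (x + 0 *\<^sub>R axis k 1) / fact n) (at 0)"
    by (rule tendsto_Maclaurin_remainder[OF r(1)])
      (use has_real_derivative_pd_line[OF assms(1) line] isCont_pd_line[OF assms(1-3)] assms(4) in auto)
  then show ?thesis
    by simp
qed

lemma Ckv_on_line_Maclaurin: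
  assumes "Ckv_on N U Phi" "open U" "x \<in> U" "n \<le> N"
  shows "((\<lambda>u. (Phi (x + u *\<^sub>R axis k 1)
      - (\<Sum>m<n. (u ^ m / fact m) *\<^sub>R pdv (replicate m k) Phi x)) /\<^sub>R u ^ n)
    \<longlongrightarrow> pdv (replicate n k) Phi x /\<^sub>R fact n) (at 0)"
proof (rule vec_tendstoI)
  fix i
  show "((\<lambda>u. ((Phi (x + u *\<^sub>R axis k 1)
      - (\<Sum>m<n. (u ^ m / fact m) *\<^sub>R pdv (replicate m k) Phi x)) /\<^sub>R u ^ n) $ i)
    \<longlongrightarrow> (pdv (replicate n k) Phi x /\<^sub>R fact n) $ i) (at 0)"
    using Ck_on_line_Maclaurin[OF assms(1)[unfolded Ckv_on_def, rule_format, of i] assms(2-4), of k]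
    by (simp add: pdv_def divide_inverse ac_simps)
qed

lemma isCont_pdv_line:
  assumes "Ckv_on N U Phi" "open U" "x \<in> U" "length is \<le> N"
  shows "isCont (\<lambda>t. pdv is Phi (x + t *\<^sub>R axis k 1)) 0"
proof -
  have "isCont (\<lambda>t. pd is (\<lambda>y. Phi y $ i) (x + t *\<^sub>R axis k 1)) 0" for i
    using isCont_pd_line assms unfolding Ckv_on_def by blast
  then show ?thesis
    unfolding isCont_def pdv_def by (auto intro: tendsto_vec_lambda)
qed

lemma pdv_Nil [simp]: "pdv [] f = f"
  by (simp add: pdv_def)

lemma Ckv_on_line_expansions:
  assumes "Ckv_on N U Phi" "2 \<le> N" "open U" "x \<in> U"
  shows "((\<lambda>u. (Phi (x + u *\<^sub>R axis k 1) - Phi x) /\<^sub>R u) \<longlongrightarrow> pdv [k] Phi x) (at 0)"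
    and "((\<lambda>u. (Phi (x + u *\<^sub>R axis k 1) - Phi x - u *\<^sub>R pdv [k] Phi x) /\<^sub>R u\<^sup>2)
      \<longlongrightarrow> pdv [k, k] Phi x /\<^sub>R 2) (at 0)"
    and "((\<lambda>u. pdv [k] Phi (x + u *\<^sub>R axis k 1)) \<longlongrightarrow> pdv [k] Phi x) (at 0)"
proof -
  show "((\<lambda>u. (Phi (x + u *\<^sub>R axis k 1) - Phi x) /\<^sub>R u) \<longlongrightarrow> pdv [k] Phi x) (at 0)"
    using Ckv_on_line_Maclaurin[OF assms(1,3,4), of 1 k] assms(2) by simp
  show "((\<lambda>u. (Phi (x + u *\<^sub>R axis k 1) - Phi x - u *\<^sub>R pdv [k] Phi x) /\<^sub>R u\<^sup>2)
      \<longlongrightarrow> pdv [k, k] Phi x /\<^sub>R 2) (at 0)"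
    using Ckv_on_line_Maclaurin[OF assms(1,3,4), of 2 k] assms(2) by (simp add: eval_nat_numeral diff_diff_eq)
  show "((\<lambda>u. pdv [k] Phi (x + u *\<^sub>R axis k 1)) \<longlongrightarrow> pdv [k] Phi x) (at 0)"
    using isCont_pdv_line[OF assms(1,3,4), of "[k]" k] assms(2) unfolding isCont_def by simp
qed

lemma Ck_on_line_vanishing_expansions:
  assumes "Ck_on N U g" "3 \<le> N" "open U" "x \<in> U" "g x = 0"
  shows "((\<lambda>u. g (x + u *\<^sub>R axis k 1) / u) \<longlongrightarrow> pd [k] g x) (at 0)"
    and "pd [k] g x = 0 \<Longrightarrow> ((\<lambda>u. g (x + u *\<^sub>R axis k 1) / u\<^sup>2) \<longlongrightarrow> pd [k, k] g x / 2) (at 0)"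
    and "pd [k] g x = 0 \<Longrightarrow> pd [k, k] g x = 0 \<Longrightarrow>
      ((\<lambda>u. g (x + u *\<^sub>R axis k 1) / u ^ 3) \<longlongrightarrow> pd [k, k, k] g x / 6) (at 0)"
  using Ck_on_line_Maclaurin[OF assms(1,3,4), of 1 k] Ck_on_line_Maclaurin[OF assms(1,3,4), of 2 k]
    Ck_on_line_Maclaurin[OF assms(1,3,4), of 3 k] assms(2,5)
  by (simp_all add: eval_nat_numeral del: pd.simps(2))

subsection \<open>The model near the disease-free equilibrium\<close>

lemma exhaust_5:
  fixes k :: 5
  shows "k = 0 \<or> k = 1 \<or> k = 2 \<or> k = 3 \<or> k = 4"
proof (induct k)
  case (of_int z)
  then have "z = 0 \<or> z = 1 \<or> z = 2 \<or> z = 3 \<or> z = 4" by fastforce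
  then show ?case by auto
qed

lemma params_pos:
  assumes "\<forall>i. p $ i > 0"
  shows "Lam p > 0" "bet p > 0" "DD p > 0" "mu p > 0" "psi p > 0"
    "ww p > 0" "sig p > 0" "gam p > 0" "eta p > 0" "del p > 0"
  using assms by (simp_all add: Lam_def bet_def DD_def mu_def psi_def ww_def sig_def gam_def
      eta_def del_def)

lemma dfe_nth:
  "dfe p $ 0 = Lam p / (mu p + psi p)"
  "dfe p $ 1 = Lam p * psi p / (mu p * (mu p + psi p))"
  "dfe p $ 2 = 0" "dfe p $ 3 = 0" "dfe p $ 4 = 0"
  by (simp_all add: dfe_def)

lemma dfe_balance:
  assumes "\<forall>i. p $ i > 0"
  shows "Lam p = (mu p + psi p) * dfe p $ 0" "psi p * dfe p $ 0 = mu p * dfe p $ 1"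
    "dfe p $ 0 > 0" "dfe p $ 1 > 0"
proof -
  note pos = params_pos[OF assms]
  show "Lam p = (mu p + psi p) * dfe p $ 0" "dfe p $ 0 > 0" "dfe p $ 1 > 0"
    using pos by (simp_all add: dfe_nth)
  have "mu p \<noteq> 0"
    using pos by auto
  then show "psi p * dfe p $ 0 = mu p * dfe p $ 1"
    by (simp add: dfe_nth)
qed

lemma saturated_incidence_split:
  fixes b X x B D :: real
  assumes "D \<noteq> 0" "B + D \<noteq> 0"
  shows "b * (X + x) * B / (B + D) = b * X * B / D + b * B / (D * (B + D)) * (D * x - X * B)"
proof -
  define E where "E = B + D"
  have nz: "E \<noteq> 0" "D \<noteq> 0"
    using assms by (simp_all add: E_def)
  have num: "X * E + D * x - X * B = D * (X + x)"
    by (simp add: E_def algebra_simps)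
  have "b * X * B / D + b * B / (D * E) * (D * x - X * B) = b * (X * E + D * x - X * B) * B / (D * E)"
    using nz by (simp add: field_simps)
  also have "\<dots> = b * (X + x) * B / E"
    unfolding num using nz by (simp add: field_simps)
  finally show ?thesis
    by (simp add: E_def)
qed

lemma F_nth:
  "F p x $ 0 = Lam p - bet p * x$0 * x$4 / (x$4 + DD p) - (mu p + psi p) * x$0 + ww p * x$3"
  "F p x $ 1 = psi p * x$0 - sig p * bet p * x$1 * x$4 / (x$4 + DD p) - mu p * x$1"
  "F p x $ 2 = bet p * x$0 * x$4 / (x$4 + DD p) + sig p * bet p * x$1 * x$4 / (x$4 + DD p)
     - (mu p + gam p) * x$2"
  "F p x $ 3 = gam p * x$2 - (mu p + ww p) * x$3"
  "F p x $ 4 = eta p * x$2 - del p * x$4"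
  by (simp_all add: F_def Let_def)

definition jac_dfe :: "real^10 \<Rightarrow> real^5 \<Rightarrow> real^5" where
  "jac_dfe p y = (\<chi> k.
     if k = 0 then - bet p * dfe p $ 0 * y$4 / DD p - (mu p + psi p) * y$0 + ww p * y$3
     else if k = 1 then psi p * y$0 - sig p * bet p * dfe p $ 1 * y$4 / DD p - mu p * y$1
     else if k = 2 then bet p * (dfe p $ 0 + sig p * dfe p $ 1) * y$4 / DD p - (mu p + gam p) * y$2
     else if k = 3 then gam p * y$2 - (mu p + ww p) * y$3
     else eta p * y$2 - del p * y$4)"

definition incidence_defect :: "real^10 \<Rightarrow> real^5 \<Rightarrow> real^5" where
  "incidence_defect p y = (\<chi> k.
     let dS = DD p * y$0 - dfe p $ 0 * y$4; dV = sig p * (DD p * y$1 - dfe p $ 1 * y$4) in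
     if k = 0 then - dS else if k = 1 then - dV else if k = 2 then dS + dV else 0)"

lemma jac_dfe_nth:
  "jac_dfe p y $ 0 = - bet p * dfe p $ 0 * y$4 / DD p - (mu p + psi p) * y$0 + ww p * y$3"
  "jac_dfe p y $ 1 = psi p * y$0 - sig p * bet p * dfe p $ 1 * y$4 / DD p - mu p * y$1"
  "jac_dfe p y $ 2 = bet p * (dfe p $ 0 + sig p * dfe p $ 1) * y$4 / DD p - (mu p + gam p) * y$2"
  "jac_dfe p y $ 3 = gam p * y$2 - (mu p + ww p) * y$3"
  "jac_dfe p y $ 4 = eta p * y$2 - del p * y$4"
  by (simp_all add: jac_dfe_def)

lemma incidence_defect_nth:
  "incidence_defect p y $ 0 = - (DD p * y$0 - dfe p $ 0 * y$4)"
  "incidence_defect p y $ 1 = - sig p * (DD p * y$1 - dfe p $ 1 * y$4)"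
  "incidence_defect p y $ 2 = DD p * (y$0 + sig p * y$1) - (dfe p $ 0 + sig p * dfe p $ 1) * y$4"
  "incidence_defect p y $ 3 = 0"
  "incidence_defect p y $ 4 = 0"
  by (simp_all add: incidence_defect_def Let_def algebra_simps)

lemma linear_jac_dfe: "linear (jac_dfe p)"
  by (rule linearI) (simp_all add: jac_dfe_def vec_eq_iff algebra_simps flip: add_divide_distrib diff_divide_distrib)

lemma linear_incidence_defect: "linear (incidence_defect p)"
  by (rule linearI) (simp_all add: incidence_defect_def Let_def vec_eq_iff algebra_simps)

definition left_null :: "real^10 \<Rightarrow> real^5 \<Rightarrow> real" where
  "left_null p y = eta p * y$2 + (mu p + gam p) * y$4"

lemma linear_left_null: "linear (left_null p)"
  by (rule linearI) (simp_all add: left_null_def algebra_simps)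

lemma tendsto_jac_dfe [tendsto_intros]:
  "(f \<longlongrightarrow> l) G \<Longrightarrow> ((\<lambda>x. jac_dfe p (f x)) \<longlongrightarrow> jac_dfe p l) G"
  by (rule bounded_linear.tendsto) (simp_all add: linear_jac_dfe flip: linear_conv_bounded_linear)

lemma tendsto_incidence_defect [tendsto_intros]:
  "(f \<longlongrightarrow> l) G \<Longrightarrow> ((\<lambda>x. incidence_defect p (f x)) \<longlongrightarrow> incidence_defect p l) G"
  by (rule bounded_linear.tendsto) (simp_all add: linear_incidence_defect flip: linear_conv_bounded_linear)

lemma tendsto_left_null [tendsto_intros]:
  "(f \<longlongrightarrow> l) G \<Longrightarrow> ((\<lambda>x. left_null p (f x)) \<longlongrightarrow> left_null p l) G"
  by (rule bounded_linear.tendsto) (simp_all add: linear_left_null flip: linear_conv_bounded_linear)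

lemma F_dfe_expansion:
  assumes "\<forall>i. p $ i > 0" "y$4 + DD p \<noteq> 0"
  shows "F p (dfe p + y) = jac_dfe p y + (bet p * y$4 / (DD p * (y$4 + DD p))) *\<^sub>R incidence_defect p y"
proof -
  have D: "DD p \<noteq> 0"
    using params_pos[OF assms(1)] by simp
  have "F p (dfe p + y) $ k = (jac_dfe p y + (bet p * y$4 / (DD p * (y$4 + DD p))) *\<^sub>R incidence_defect p y) $ k" for k
    using exhaust_5[of k]
    by (elim disjE; simp add: F_nth dfe_nth(3-5) saturated_incidence_split[OF D assms(2)];
        simp add: jac_dfe_nth incidence_defect_nth dfe_balance(1,2)[OF assms(1)] algebra_simps
          flip: add_divide_distrib diff_divide_distrib)
  then show ?thesis
    by (simp add: vec_eq_iff)
qed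

lemma has_real_derivative_F_dfe_line:
  assumes pos: "\<forall>i. p $ i > 0"
  shows "((\<lambda>t. F p (dfe p + t *\<^sub>R z) $ r) has_real_derivative jac_dfe p z $ r) (at 0)"
proof -
  have D: "DD p > 0" using params_pos[OF pos] by simp
  let ?g = "\<lambda>t. t * jac_dfe p z $ r
    + t * (bet p * (t * z$4) / (DD p * (t * z$4 + DD p))) * incidence_defect p z $ r"
  have "(?g has_real_derivative jac_dfe p z $ r) (at 0)"
    using D by (auto intro!: derivative_eq_intros)
  then show ?thesis
  proof (rule has_field_derivative_transform_within_open)
    show "open {t. 0 < t * z$4 + DD p}"
      by (rule open_Collect_less) (auto intro!: continuous_intros)
    show "0 \<in> {t. 0 < t * z$4 + DD p}" using D by simp
    show "?g t = F p (dfe p + t *\<^sub>R z) $ r" if "t \<in> {t. 0 < t * z$4 + DD p}" for t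
      using that F_dfe_expansion[OF pos, of "t *\<^sub>R z"]
      by (simp add: linear_scale[OF linear_jac_dfe] linear_scale[OF linear_incidence_defect] algebra_simps)
  qed
qed

lemma jac_eq_jac_dfe:
  assumes "\<forall>i. p $ i > 0"
  shows "jac p *v y = jac_dfe p y"
proof -
  have "jac p = matrix (jac_dfe p)"
    by (simp add: vec_eq_iff jac_def matrix_def DERIV_imp_deriv[OF has_real_derivative_F_dfe_line[OF assms]])
  then show ?thesis
    by (metis matrix_vector_mul(2) linear_jac_dfe)
qed

lemma left_null_jac_dfe:
  assumes "\<forall>i. p $ i > 0" "R0 p = 1"
  shows "left_null p (jac_dfe p y) = 0"
proof -
  note pos = params_pos[OF assms(1)]
  have "eta p * bet p * (dfe p $ 0 + sig p * dfe p $ 1) = DD p * del p * (mu p + gam p)"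
    using assms(2) pos by (simp add: R0_def field_simps)
  moreover have "left_null p (jac_dfe p y) = y$4 / DD p *
      (eta p * bet p * (dfe p $ 0 + sig p * dfe p $ 1) - DD p * del p * (mu p + gam p))"
    using pos by (simp add: left_null_def jac_dfe_nth field_simps)
  ultimately show ?thesis
    by simp
qed

lemma left_null_incidence_defect:
  "left_null p (incidence_defect p y) = eta p * incidence_defect p y $ 2"
  by (simp add: left_null_def incidence_defect_nth)

subsection \<open>Expanding the invariance equation in powers of u\<close>

lemma F_dfe_scaled_first:
  assumes "\<forall>i. p $ i > 0" "y$4 + DD p \<noteq> 0"
  shows "F p (dfe p + y) /\<^sub>R u
    = jac_dfe p (y /\<^sub>R u) + (bet p * (y /\<^sub>R u) $ 4 / (DD p * (y $ 4 + DD p))) *\<^sub>R incidence_defect p y"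
  unfolding F_dfe_expansion[OF assms]
  by (simp add: linear_scale[OF linear_jac_dfe] scaleR_add_right mult.left_commute)

lemma F_dfe_scaled_second:
  assumes "\<forall>i. p $ i > 0" "y$4 + DD p \<noteq> 0" and v: "jac_dfe p v = 0"
  shows "F p (dfe p + y) /\<^sub>R u\<^sup>2
    = jac_dfe p ((y - u *\<^sub>R v) /\<^sub>R u\<^sup>2)
      + (bet p * (y /\<^sub>R u) $ 4 / (DD p * (y $ 4 + DD p))) *\<^sub>R incidence_defect p (y /\<^sub>R u)"
  unfolding F_dfe_expansion[OF assms(1,2)] using v
  by (simp add: linear_scale[OF linear_jac_dfe] linear_diff[OF linear_jac_dfe]
      linear_scale[OF linear_incidence_defect] scaleR_add_right power2_eq_square mult_ac)

lemma left_null_F_dfe_scaled_third: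
  assumes pos: "\<forall>i. p $ i > 0" "y$4 + DD p \<noteq> 0" and R0: "R0 p = 1"
    and defect: "incidence_defect p v $ 2 = 0"
  shows "left_null p (F p (dfe p + y)) / u ^ 3
    = eta p * bet p * (y /\<^sub>R u) $ 4 / (DD p * (y $ 4 + DD p))
      * incidence_defect p ((y - u *\<^sub>R v) /\<^sub>R u\<^sup>2) $ 2"
proof -
  have "left_null p (F p (dfe p + y))
      = bet p * y $ 4 / (DD p * (y $ 4 + DD p)) * (eta p * incidence_defect p y $ 2)"
    unfolding F_dfe_expansion[OF pos] by (simp add: linear_add[OF linear_left_null]
        linear_scale[OF linear_left_null] left_null_jac_dfe[OF pos(1) R0] left_null_incidence_defect)
  then show ?thesis
    using defect by (simp add: linear_diff[OF linear_incidence_defect] linear_scale[OF linear_incidence_defect]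
        power2_eq_square power3_eq_cube divide_inverse mult_ac)
qed

lemma tendsto_zero_if_scaled_tendsto:
  fixes y :: "real \<Rightarrow> 'a::real_normed_vector"
  assumes "((\<lambda>u. y u /\<^sub>R u) \<longlongrightarrow> v) (at 0)"
  shows "(y \<longlongrightarrow> 0) (at 0)"
proof -
  have "((\<lambda>u. u *\<^sub>R (y u /\<^sub>R u)) \<longlongrightarrow> 0 *\<^sub>R v) (at 0)"
    by (intro tendsto_intros assms)
  then have "((\<lambda>u. u *\<^sub>R (y u /\<^sub>R u)) \<longlongrightarrow> 0) (at 0)"
    by simp
  then show ?thesis
    by (rule Lim_transform_eventually) (simp add: eventually_at_filter)
qed

lemma eventually_dfe_denominator_pos:
  assumes "\<forall>i. p $ i > 0" "(y \<longlongrightarrow> 0) G"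
  shows "\<forall>\<^sub>F u in G. y u $ 4 + DD p > 0"
proof -
  have "((\<lambda>u. y u $ 4 + DD p) \<longlongrightarrow> 0 + DD p) G"
    using tendsto_add[OF tendsto_vec_nth[OF assms(2), where i = 4] tendsto_const[of "DD p"]] by simp
  then show ?thesis
    by (rule order_tendstoD) (simp add: params_pos[OF assms(1)])
qed

lemma first_order_coefficient_eq_0:
  assumes pos: "\<forall>i. p $ i > 0"
    and inv: "\<forall>\<^sub>F u in at 0. F p (dfe p + y u) = \<eta> u *\<^sub>R w u"
    and y: "((\<lambda>u. y u /\<^sub>R u) \<longlongrightarrow> v) (at 0)" and w: "(w \<longlongrightarrow> v) (at 0)"
    and \<eta>: "((\<lambda>u. \<eta> u / u) \<longlongrightarrow> \<eta>1) (at 0)"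
    and v: "jac_dfe p v = 0" "v \<noteq> 0"
  shows "\<eta>1 = 0"
proof -
  have y0: "(y \<longlongrightarrow> 0) (at 0)"
    using y by (rule tendsto_zero_if_scaled_tendsto)
  have "((\<lambda>u. jac_dfe p (y u /\<^sub>R u)
        + (bet p * (y u /\<^sub>R u) $ 4 / (DD p * (y u $ 4 + DD p))) *\<^sub>R incidence_defect p (y u))
      \<longlongrightarrow> jac_dfe p v
        + (bet p * v $ 4 / (DD p * ((0::real^5) $ 4 + DD p))) *\<^sub>R incidence_defect p 0) (at 0)"
    (is "(?E \<longlongrightarrow> ?L) _")
    using params_pos[OF pos] by (intro tendsto_intros tendsto_vec_nth y y0) auto
  moreover have "\<forall>\<^sub>F u in at 0. ?E u = (\<eta> u / u) *\<^sub>R w u"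
    using inv eventually_dfe_denominator_pos[OF pos y0]
  proof eventually_elim
    case (elim u)
    then show ?case
      using F_dfe_scaled_first[OF pos, of "y u" u] by (simp add: divide_inverse mult.commute)
  qed
  ultimately have "((\<lambda>u. (\<eta> u / u) *\<^sub>R w u) \<longlongrightarrow> ?L) (at 0)"
    by (rule Lim_transform_eventually)
  with tendsto_scaleR[OF \<eta> w] have "\<eta>1 *\<^sub>R v = ?L"
    by (rule tendsto_unique[OF trivial_limit_at])
  then have "\<eta>1 *\<^sub>R v = 0"
    using v(1) by (simp add: linear_0[OF linear_incidence_defect])
  then show ?thesis
    using v(2) by simp
qed

lemma second_order_coefficient:
  assumes pos: "\<forall>i. p $ i > 0"
    and inv: "\<forall>\<^sub>F u in at 0. F p (dfe p + y u) = \<eta> u *\<^sub>R w u"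
    and y: "((\<lambda>u. y u /\<^sub>R u) \<longlongrightarrow> v) (at 0)"
    and y2: "((\<lambda>u. (y u - u *\<^sub>R v) /\<^sub>R u\<^sup>2) \<longlongrightarrow> q) (at 0)"
    and w: "(w \<longlongrightarrow> v) (at 0)"
    and \<eta>: "((\<lambda>u. \<eta> u / u\<^sup>2) \<longlongrightarrow> \<eta>2) (at 0)"
    and v: "jac_dfe p v = 0"
  shows "\<eta>2 *\<^sub>R v = jac_dfe p q + (bet p * v$4 / (DD p)\<^sup>2) *\<^sub>R incidence_defect p v"
proof -
  have y0: "(y \<longlongrightarrow> 0) (at 0)"
    using y by (rule tendsto_zero_if_scaled_tendsto)
  have "((\<lambda>u. jac_dfe p ((y u - u *\<^sub>R v) /\<^sub>R u\<^sup>2)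
        + (bet p * (y u /\<^sub>R u) $ 4 / (DD p * (y u $ 4 + DD p))) *\<^sub>R incidence_defect p (y u /\<^sub>R u))
      \<longlongrightarrow> jac_dfe p q
        + (bet p * v $ 4 / (DD p * ((0::real^5) $ 4 + DD p))) *\<^sub>R incidence_defect p v) (at 0)"
    (is "(?E \<longlongrightarrow> ?L) _")
    using params_pos[OF pos] by (intro tendsto_intros tendsto_vec_nth y y0 y2) auto
  moreover have "\<forall>\<^sub>F u in at 0. ?E u = (\<eta> u / u\<^sup>2) *\<^sub>R w u"
    using inv eventually_dfe_denominator_pos[OF pos y0]
  proof eventually_elim
    case (elim u)
    then show ?case
      using F_dfe_scaled_second[OF pos, of "y u" v u] v by (simp add: divide_inverse mult.commute)
  qed
  ultimately have "((\<lambda>u. (\<eta> u / u\<^sup>2) *\<^sub>R w u) \<longlongrightarrow> ?L) (at 0)"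
    by (rule Lim_transform_eventually)
  with tendsto_scaleR[OF \<eta> w] have "\<eta>2 *\<^sub>R v = ?L"
    by (rule tendsto_unique[OF trivial_limit_at])
  then show ?thesis
    by (simp add: power2_eq_square)
qed

lemma third_order_coefficient:
  assumes pos: "\<forall>i. p $ i > 0" and R0: "R0 p = 1"
    and inv: "\<forall>\<^sub>F u in at 0. F p (dfe p + y u) = \<eta> u *\<^sub>R w u"
    and y: "((\<lambda>u. y u /\<^sub>R u) \<longlongrightarrow> v) (at 0)"
    and y2: "((\<lambda>u. (y u - u *\<^sub>R v) /\<^sub>R u\<^sup>2) \<longlongrightarrow> q) (at 0)"
    and w: "(w \<longlongrightarrow> v) (at 0)"
    and \<eta>: "((\<lambda>u. \<eta> u / u ^ 3) \<longlongrightarrow> \<eta>3) (at 0)"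
    and defect: "incidence_defect p v $ 2 = 0"
  shows "\<eta>3 * left_null p v = eta p * bet p * v$4 / (DD p)\<^sup>2 * incidence_defect p q $ 2"
proof -
  have y0: "(y \<longlongrightarrow> 0) (at 0)"
    using y by (rule tendsto_zero_if_scaled_tendsto)
  have "((\<lambda>u. eta p * bet p * (y u /\<^sub>R u) $ 4 / (DD p * (y u $ 4 + DD p))
        * incidence_defect p ((y u - u *\<^sub>R v) /\<^sub>R u\<^sup>2) $ 2)
      \<longlongrightarrow> eta p * bet p * v $ 4 / (DD p * ((0::real^5) $ 4 + DD p)) * incidence_defect p q $ 2) (at 0)"
    (is "(?E \<longlongrightarrow> ?L) _")
    using params_pos[OF pos] by (intro tendsto_intros tendsto_vec_nth y y0 y2) auto
  moreover have "\<forall>\<^sub>F u in at 0. ?E u = \<eta> u / u ^ 3 * left_null p (w u)"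
    using inv eventually_dfe_denominator_pos[OF pos y0]
  proof eventually_elim
    case (elim u)
    then show ?case
      using left_null_F_dfe_scaled_third[OF pos, of "y u" v u] R0 defect
      by (simp add: linear_scale[OF linear_left_null])
  qed
  ultimately have "((\<lambda>u. \<eta> u / u ^ 3 * left_null p (w u)) \<longlongrightarrow> ?L) (at 0)"
    by (rule Lim_transform_eventually)
  with tendsto_mult[OF \<eta> tendsto_left_null[OF w]] have "\<eta>3 * left_null p v = ?L"
    by (rule tendsto_unique[OF trivial_limit_at])
  then show ?thesis
    by (simp add: power2_eq_square)
qed

subsection \<open>Signs at the bifurcation point\<close>

lemma null_vector_pos:
  assumes pos: "\<forall>i. p $ i > 0" and v: "jac_dfe p v = 0" "v \<noteq> 0" "v$4 \<ge> 0"
  shows "v$4 > 0" "v$2 > 0" "v$3 > 0"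
proof -
  note P = params_pos[OF pos]
  have rows: "- bet p * dfe p $ 0 * v$4 / DD p - (mu p + psi p) * v$0 + ww p * v$3 = 0"
    "psi p * v$0 - sig p * bet p * dfe p $ 1 * v$4 / DD p - mu p * v$1 = 0"
    "(mu p + ww p) * v$3 = gam p * v$2" "eta p * v$2 = del p * v$4"
    using v(1) jac_dfe_nth[of p v] by simp_all
  show v4: "v$4 > 0"
  proof (rule ccontr)
    assume "\<not> v$4 > 0"
    then have "v$4 = 0" using v(3) by simp
    moreover from this have "v$2 = 0" using rows(4) P by simp
    moreover from this have "v$3 = 0" using rows(3) P by (simp add: add_pos_pos)
    moreover from calculation have "v$0 = 0" using rows(1) P by (simp add: add_pos_pos)
    moreover from calculation have "v$1 = 0" using rows(2) P by simp
    ultimately have "v $ i = 0" for i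
      using exhaust_5[of i] by auto
    with v(2) show False
      by (simp add: vec_eq_iff)
  qed
  have "0 < eta p * v$2"
    using rows(4) P v4 by simp
  then show v2: "v$2 > 0"
    using P by (simp add: zero_less_mult_iff)
  have "0 < (mu p + ww p) * v$3"
    using rows(3) P v2 by simp
  moreover have "mu p + ww p > 0"
    using P by (simp add: add_pos_pos)
  ultimately show "v$3 > 0"
    by (rule zero_less_mult_pos)
qed

lemma null_vector_defect_eq_0:
  assumes pos: "\<forall>i. p $ i > 0" and R0: "R0 p = 1" and v4: "v$4 > 0"
    and q: "jac_dfe p q + (bet p * v$4 / (DD p)\<^sup>2) *\<^sub>R incidence_defect p v = 0"
  shows "incidence_defect p v $ 2 = 0"
proof -
  note P = params_pos[OF pos]
  have "0 = left_null p (jac_dfe p q + (bet p * v$4 / (DD p)\<^sup>2) *\<^sub>R incidence_defect p v)"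
    using q by (simp add: left_null_def)
  also have "\<dots> = bet p * v$4 / (DD p)\<^sup>2 * eta p * incidence_defect p v $ 2"
    by (simp add: linear_add[OF linear_left_null] linear_scale[OF linear_left_null]
        left_null_jac_dfe[OF pos R0] left_null_incidence_defect)
  finally show ?thesis
    using P v4 by simp
qed

lemma null_vector_susceptible_excess_pos:
  assumes pos: "\<forall>i. p $ i > 0" and row: "jac_dfe p v $ 1 = 0" and v4: "v$4 > 0"
    and defect: "incidence_defect p v $ 2 = 0"
  shows "DD p * v$0 - dfe p $ 0 * v$4 > 0"
proof -
  note P = params_pos[OF pos] and B = dfe_balance[OF pos]
  define X where "X = DD p * v$0 - dfe p $ 0 * v$4"
  define Y where "Y = DD p * v$1 - dfe p $ 1 * v$4"
  have XY: "X + sig p * Y = 0"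
    using defect by (simp add: incidence_defect_nth X_def Y_def algebra_simps)
  have row': "psi p * DD p * v$0 - sig p * bet p * dfe p $ 1 * v$4 - mu p * DD p * v$1 = 0"
    using row P by (simp add: jac_dfe_nth field_simps)
  have "X * (mu p + sig p * psi p) = (sig p)\<^sup>2 * bet p * dfe p $ 1 * v$4 + mu p * (X + sig p * Y)
      + sig p * (psi p * DD p * v$0 - sig p * bet p * dfe p $ 1 * v$4 - mu p * DD p * v$1)
      + sig p * v$4 * (mu p * dfe p $ 1 - psi p * dfe p $ 0)"
    by (simp add: X_def Y_def power2_eq_square algebra_simps)
  also have "\<dots> = (sig p)\<^sup>2 * bet p * dfe p $ 1 * v$4"
    using XY row' B(2) by simp
  finally have "0 < X * (mu p + sig p * psi p)"
    using P B v4 by simp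
  moreover have "mu p + sig p * psi p > 0"
    using P by (simp add: add_pos_pos)
  ultimately show ?thesis
    unfolding X_def[symmetric] by (rule zero_less_mult_pos2)
qed

lemma null_vector_sig_lt_1:
  assumes pos: "\<forall>i. p $ i > 0" and v: "jac_dfe p v = 0" "v$2 > 0" "v$3 > 0" "v$4 > 0"
    and defect: "incidence_defect p v $ 2 = 0"
  shows "sig p < 1"
proof -
  note P = params_pos[OF pos] and B = dfe_balance[OF pos]
  define X where "X = DD p * v$0 - dfe p $ 0 * v$4"
  define Y where "Y = DD p * v$1 - dfe p $ 1 * v$4"
  have X: "X > 0"
    unfolding X_def using null_vector_susceptible_excess_pos[OF pos _ v(4) defect] v(1) by simp
  have "jac_dfe p v $ 0 + jac_dfe p v $ 1 + jac_dfe p v $ 2 + jac_dfe p v $ 3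
      = - mu p * (v$0 + v$1 + v$2 + v$3)"
    using P by (simp add: jac_dfe_nth field_simps)
  then have "v$0 + v$1 = - (v$2 + v$3)"
    using v(1) P by simp
  then have "DD p * (v$0 + v$1) < 0"
    using P v by (simp add: mult_pos_neg add_pos_pos)
  moreover have "(dfe p $ 0 + dfe p $ 1) * v$4 > 0"
    using B v by (simp add: add_pos_pos)
  moreover have "X + Y = DD p * (v$0 + v$1) - (dfe p $ 0 + dfe p $ 1) * v$4"
    by (simp add: X_def Y_def algebra_simps)
  ultimately have "X + Y < 0"
    by simp
  moreover have "sig p * (X + Y) = (sig p - 1) * X"
    using defect by (simp add: incidence_defect_nth X_def Y_def algebra_simps)
  ultimately have "(sig p - 1) * X < 0"
    using P by (metis mult_pos_neg)
  then show ?thesis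
    using X by (simp add: mult_less_0_iff)
qed

lemma second_order_defect_neg:
  assumes pos: "\<forall>i. p $ i > 0" and v: "jac_dfe p v = 0" "v$2 > 0" "v$3 > 0" "v$4 > 0"
    and defect: "incidence_defect p v $ 2 = 0"
    and q: "jac_dfe p q + (bet p * v$4 / (DD p)\<^sup>2) *\<^sub>R incidence_defect p v = 0"
  shows "incidence_defect p q $ 2 < 0"
proof -
  note P = params_pos[OF pos]
  define k where "k = bet p * v$4 / (DD p)\<^sup>2"
  define X where "X = DD p * v$0 - dfe p $ 0 * v$4"
  define q' where "q' = q - (q$4 / v$4) *\<^sub>R v"
  have k: "k > 0"
    using P v(4) by (simp add: k_def)
  have X: "X > 0"
    unfolding X_def using null_vector_susceptible_excess_pos[OF pos _ v(4) defect] v(1) by simp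
  have Jq': "jac_dfe p q' = - k *\<^sub>R incidence_defect p v"
    using q v(1) by (simp add: q'_def k_def linear_diff[OF linear_jac_dfe] linear_scale[OF linear_jac_dfe]
        eq_neg_iff_add_eq_0)
  have q'4: "q'$4 = 0"
    using v(4) by (simp add: q'_def)
  have q'2: "q'$2 = 0"
    using arg_cong[OF Jq', of "\<lambda>x. x $ 4"] q'4 P by (simp add: jac_dfe_nth incidence_defect_nth)
  have q'3: "q'$3 = 0"
    using arg_cong[OF Jq', of "\<lambda>x. x $ 3"] q'2 P by (simp add: jac_dfe_nth incidence_defect_nth add_pos_pos)
  have row0: "(mu p + psi p) * q'$0 = - k * X"
    using arg_cong[OF Jq', of "\<lambda>x. x $ 0"] q'3 q'4
    by (simp add: jac_dfe_nth incidence_defect_nth X_def algebra_simps)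
  have row1: "psi p * q'$0 - mu p * q'$1 = - k * X"
  proof -
    have "sig p * (DD p * v$1 - dfe p $ 1 * v$4) = - X"
      using defect by (simp add: incidence_defect_nth X_def algebra_simps)
    then show ?thesis
      using arg_cong[OF Jq', of "\<lambda>x. x $ 1"] q'4 by (simp add: jac_dfe_nth incidence_defect_nth)
  qed
  have "(mu p + psi p) * q'$0 < 0"
    using row0 k X by simp
  then have q'0: "q'$0 < 0"
    using P add_pos_pos[of "mu p" "psi p"] by (simp add: mult_less_0_iff)
  have "mu p * q'$1 = mu p * (- q'$0)"
    using row0 row1 by algebra
  then have q'1: "q'$1 = - q'$0"
    using P by (subst (asm) mult_left_cancel) auto
  have "incidence_defect p q $ 2 = incidence_defect p q' $ 2"
    using defect by (simp add: q'_def linear_diff[OF linear_incidence_defect] linear_scale[OF linear_incidence_defect])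
  also have "\<dots> = DD p * q'$0 * (1 - sig p)"
    using q'1 q'4 by (simp add: incidence_defect_nth algebra_simps)
  also have "\<dots> < 0"
    using null_vector_sig_lt_1[OF pos v defect] q'0 P by (simp add: mult_neg_pos mult_pos_neg)
  finally show ?thesis .
qed

lemma cubic_coefficient_neg:
  assumes pos: "\<forall>i. p $ i > 0" and R0: "R0 p = 1"
    and inv: "\<forall>\<^sub>F u in at 0. F p (dfe p + y u) = \<eta> u *\<^sub>R w u"
    and y: "((\<lambda>u. y u /\<^sub>R u) \<longlongrightarrow> v) (at 0)"
    and y2: "((\<lambda>u. (y u - u *\<^sub>R v) /\<^sub>R u\<^sup>2) \<longlongrightarrow> q) (at 0)"
    and w: "(w \<longlongrightarrow> v) (at 0)"
    and v: "jac_dfe p v = 0" "v \<noteq> 0" "v$4 \<ge> 0"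
    and \<eta>2: "((\<lambda>u. \<eta> u / u\<^sup>2) \<longlongrightarrow> 0) (at 0)"
    and \<eta>3: "((\<lambda>u. \<eta> u / u ^ 3) \<longlongrightarrow> \<eta>3) (at 0)"
  shows "\<eta>3 < 0"
proof -
  note P = params_pos[OF pos]
  have vpos: "v$4 > 0" "v$2 > 0" "v$3 > 0"
    using null_vector_pos[OF pos v] by simp_all
  have q: "jac_dfe p q + (bet p * v$4 / (DD p)\<^sup>2) *\<^sub>R incidence_defect p v = 0"
    using second_order_coefficient[OF pos inv y y2 w \<eta>2 v(1)] by simp
  have defect: "incidence_defect p v $ 2 = 0"
    by (rule null_vector_defect_eq_0[OF pos R0 vpos(1) q])
  have "\<eta>3 * left_null p v = eta p * bet p * v$4 / (DD p)\<^sup>2 * incidence_defect p q $ 2"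
    by (rule third_order_coefficient[OF pos R0 inv y y2 w \<eta>3 defect])
  also have "\<dots> < 0"
    using P vpos(1) by (intro mult_pos_neg second_order_defect_neg[OF pos v(1) vpos(2,3,1) defect q]) simp
  finally have "\<eta>3 * left_null p v < 0" .
  moreover have "left_null p v > 0"
    using P vpos by (simp add: left_null_def add_pos_pos)
  ultimately show ?thesis
    by (simp add: mult_less_0_iff)
qed

theorem lemma1:
  fixes p0 :: "real^10" and i j :: 10
    and Phi :: "real^3 \<Rightarrow> real^5" and h :: "real^3 \<Rightarrow> real" and U :: "(real^3) set"
    and P :: "real^3 \<Rightarrow> real^10" and a b c d e :: real
  defines "P \<equiv> (\<lambda>y. p0 + (y$1) *\<^sub>R axis i 1 + (y$2) *\<^sub>R axis j 1)"
    and "a \<equiv> pd [0,0] h 0 / 2"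
    and "b \<equiv> pd [1,0] h 0"
    and "c \<equiv> pd [0,0,0] h 0 / 3"
    and "d \<equiv> pd [2,0,0] h 0"
    and "e \<equiv> (- b * d + pd [1,0,0] h 0 * pd [2,0] h 0) / (2 * b * c)"
  assumes bif: "bif_point p0"
    and ij: "i \<noteq> j"
    and indep: "\<forall>t. dfe (p0 + t *\<^sub>R axis i 1) = dfe p0"
    and U: "open U" "0 \<in> U"
    and smooth: "Ckv_on 3 U Phi" "Ck_on 3 U h"
    and invariant: "\<forall>y\<in>U. F (P y) (Phi y) = h y *\<^sub>R pdv [0] Phi y"
    and base: "\<forall>y\<in>U. y$0 = 0 \<longrightarrow> Phi y = dfe (P y) \<and> h y = 0"
    and null: "jac p0 *v pdv [0] Phi 0 = 0" "pdv [0] Phi 0 \<noteq> 0"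
              "pdv [0] Phi 0 $ 2 \<ge> 0" "pdv [0] Phi 0 $ 4 \<ge> 0"
    and hyp: "a = 0" "b > 0" "e \<noteq> 0"
  shows "c \<le> 0"
proof -
  have pos: "\<forall>i. p0 $ i > 0" and R0: "R0 p0 = 1"
    using bif by (auto simp: bif_point_def)
  let ?e = "axis 0 1 :: real^3"
  define v where "v = pdv [0] Phi 0"
  define y where "y u = Phi (u *\<^sub>R ?e) - Phi 0" for u
  define w where "w u = pdv [0] Phi (u *\<^sub>R ?e)" for u
  define \<eta> where "\<eta> u = h (u *\<^sub>R ?e)" for u
  have P_axis: "P (u *\<^sub>R ?e) = p0" for u
    by (simp add: P_def axis_def)
  have Phi0: "Phi 0 = dfe p0" and h0: "h 0 = 0"
    using base U(2) P_axis[of 0] by auto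
  have "\<forall>\<^sub>F u in at 0. u *\<^sub>R ?e \<in> U"
    using topological_tendstoD[OF tendsto_scaleR[OF tendsto_ident_at tendsto_const] U(1)] U(2) by simp
  then have inv: "\<forall>\<^sub>F u in at 0. F p0 (dfe p0 + y u) = \<eta> u *\<^sub>R w u"
  proof eventually_elim
    case (elim u)
    then show ?case
      using invariant[rule_format, OF elim] by (simp add: y_def w_def \<eta>_def P_axis Phi0)
  qed
  have Jv: "jac_dfe p0 v = 0"
    using null(1) by (simp add: v_def jac_eq_jac_dfe[OF pos])
  have y: "((\<lambda>u. y u /\<^sub>R u) \<longlongrightarrow> v) (at 0)"
    and y2: "((\<lambda>u. (y u - u *\<^sub>R v) /\<^sub>R u\<^sup>2) \<longlongrightarrow> pdv [0, 0] Phi 0 /\<^sub>R 2) (at 0)"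
    and w: "(w \<longlongrightarrow> v) (at 0)"
    using Ckv_on_line_expansions[OF smooth(1) _ U(1,2), of 0] by (simp_all add: y_def w_def[abs_def] v_def)
  have \<eta>1: "((\<lambda>u. \<eta> u / u) \<longlongrightarrow> pd [0] h 0) (at 0)"
    using Ck_on_line_vanishing_expansions(1)[OF smooth(2) _ U(1,2) h0, of 0]
    by (simp add: \<eta>_def del: pd.simps(2))
  have h1: "pd [0] h 0 = 0"
    by (rule first_order_coefficient_eq_0[OF pos inv y w \<eta>1 Jv null(2)[folded v_def]])
  have \<eta>2: "((\<lambda>u. \<eta> u / u\<^sup>2) \<longlongrightarrow> 0) (at 0)"
    and \<eta>3: "((\<lambda>u. \<eta> u / u ^ 3) \<longlongrightarrow> c / 2) (at 0)"
    using Ck_on_line_vanishing_expansions(2,3)[OF smooth(2) _ U(1,2) h0 h1] hyp(1)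
    by (simp_all add: \<eta>_def a_def c_def del: pd.simps(2))
  have "c / 2 < 0"
    using null(4)
    by (intro cubic_coefficient_neg[OF pos R0 inv y y2 w Jv null(2)[folded v_def] _ \<eta>2 \<eta>3]) (simp add: v_def)
  then show ?thesis
    by simp
qed

end
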